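(* Let $m,n\in\mathbb{N}$, $T=\{1,\dots,m\}$, and let $\mathcal{F}:\mathbb{R}^{m\times n}\times\mathbb{R}^m\rightrightarrows\mathbb{R}^n$ be given by $\mathcal{F}(A,b)=\{x\in\mathbb{R}^n\mid Ax\le b\}$. Let $(\bar A,\bar b)$ satisfy $\mathcal{F}(\bar A,\bar b)\neq\emptyset$. Then $$\operatorname{Lipusc}\mathcal{F}(\bar A,\bar b)=\lim_{\delta\downarrow 0}\ \sup\left\{\frac{(\|x\|+1)\,\operatorname{dist}\big(x,\mathcal{F}(\bar A,\bar b)\big)}{\|(\bar Ax-\bar b)_+\|_\infty}\ \Bigg|\ x\in\mathbb{R}^n,\ \|(\bar Ax-\bar b)_+\|_\infty\le\delta(\|x\|+1)\right\},$$ where the limit exists in $[0,+\infty]$.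
   Context: $\mathbb{R}^n$ carries an arbitrary norm $\|\cdot\|$ with dual norm $\|u\|_*=\max_{\|x\|\le1}|u'x|$. $\mathbb{R}^m$ carries $\|b\|_\infty=\max_t|b_t|$. The parameter space $\mathbb{R}^{m\times n}\times\mathbb{R}^m$ carries the norm $\|(A,b)\|=\max_{t\in T}\max\{\|a_t\|_*,|b_t|\}$, where $a_t'$ is the $t$-th row of $A$. $(\bar Ax-\bar b)_+$ is the vector with components $\max\{\bar a_t'x-\bar b_t,0\}$. $\operatorname{dist}(x,\Omega)=\inf_{\omega\in\Omega}\|x-\omega\|$, with $\inf\emptyset=+\infty$; the convention $0/0:=0$ is used. For a set-valued map $\mathcal{M}:Y\rightrightarrows X$ between metric spaces and $\bar y$ with $\mathcal{M}(\bar y)\ne\emptyset$, the Lipschitz upper semicontinuity modulus $\operatorname{Lipusc}\mathcal{M}(\bar y)$ is the infimum of all $\kappa\ge0$ for which there is a neighborhood $V$ of $\bar y$ with $\operatorname{dist}(x,\mathcal{M}(\bar y))\le\kappa\operatorname{dist}(y,\bar y)$ for all $y\in V$ and all $x\in\mathcal{M}(y)$ (infimum of the empty set is $+\infty$). *)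

theory Defs
  imports "HOL-Analysis.Analysis"
begin

definition is_norm :: "(real^'n \<Rightarrow> real) \<Rightarrow> bool" where
  "is_norm N \<longleftrightarrow> (\<forall>x. N x = 0 \<longleftrightarrow> x = 0) \<and>
     (\<forall>c x. N (c *\<^sub>R x) = \<bar>c\<bar> * N x) \<and>
     (\<forall>x y. N (x + y) \<le> N x + N y)"

definition dual_norm :: "(real^'n \<Rightarrow> real) \<Rightarrow> real^'n \<Rightarrow> real" where
  "dual_norm N u = Sup {\<bar>u \<bullet> x\<bar> | x. N x \<le> 1}"

definition feas :: "real^'n^'m \<Rightarrow> real^'m \<Rightarrow> (real^'n) set" where
  "feas A b = {x. \<forall>t. A $ t \<bullet> x \<le> b $ t}"

text \<open>Distance to a set w.r.t. N, with inf of the empty set = +infinity.\<close>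
definition distN :: "(real^'n \<Rightarrow> real) \<Rightarrow> real^'n \<Rightarrow> (real^'n) set \<Rightarrow> ereal" where
  "distN N x \<Omega> = (INF w\<in>\<Omega>. ereal (N (x - w)))"

definition pnorm :: "(real^'n \<Rightarrow> real) \<Rightarrow> real^'n^'m \<Rightarrow> real^'m \<Rightarrow> real" where
  "pnorm N A b = Max (range (\<lambda>t. max (dual_norm N (A $ t)) \<bar>b $ t\<bar>))"

definition pdist :: "(real^'n \<Rightarrow> real) \<Rightarrow> ((real^'n^'m) \<times> (real^'m)) \<Rightarrow> ((real^'n^'m) \<times> (real^'m)) \<Rightarrow> real" where
  "pdist N p q = pnorm N (fst p - fst q) (snd p - snd q)"

definition Lipusc_feas :: "(real^'n \<Rightarrow> real) \<Rightarrow> real^'n^'m \<Rightarrow> real^'m \<Rightarrow> ereal" where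
  "Lipusc_feas N Abar bbar = Inf {ereal \<kappa> | \<kappa>. \<kappa> \<ge> 0 \<and>
      (\<exists>\<epsilon>>0. \<forall>A b. pdist N (A, b) (Abar, bbar) < \<epsilon> \<longrightarrow>
         (\<forall>x\<in>feas A b. distN N x (feas Abar bbar) \<le> ereal \<kappa> * ereal (pdist N (A, b) (Abar, bbar))))}"

definition resid :: "real^'n^'m \<Rightarrow> real^'m \<Rightarrow> real^'n \<Rightarrow> real" where
  "resid A b x = infnorm (\<chi> t. max (A $ t \<bullet> x - b $ t) 0)"

text \<open>The supremum in the formula, for a given delta (quotients use 0/0 = 0,
  which agrees with Isabelle's x/0 = 0; the numerator is finite since F(Abar,bbar) is nonempty).\<close>
definition sup_delta :: "(real^'n \<Rightarrow> real) \<Rightarrow> real^'n^'m \<Rightarrow> real^'m \<Rightarrow> real \<Rightarrow> ereal" where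
  "sup_delta N A b \<delta> = Sup {ereal ((N x + 1) * real_of_ereal (distN N x (feas A b)) / resid A b x) | x.
       resid A b x \<le> \<delta> * (N x + 1)}"

end

theory Submission
  imports Defs
begin

(*
  A point x that is feasible for a perturbation (A, b) at distance d from (Abar, bbar) has
  residual at most d (N x + 1), since each row of Abar x - bbar differs from that of A x - b
  by at most d N x + d. Conversely, a point x with residual r is feasible for the perturbation
  a_t = abar_t - rho u, b_t = bbar_t + rho of size rho = r / (N x + 1), where u is a norming
  functional of x (u'x = N x, dual norm at most 1). So the quotients in the supremum for delta
  are distances to F(Abar, bbar) divided by the size of a perturbation of size at most delta
  that contains the point: the supremum for any delta > 0 is an upper Lipschitz constant on
  the delta-neighbourhood, and any upper Lipschitz constant valid on an epsilon-neighbourhood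
  bounds the supremum for all delta < epsilon.
*)

lemma infnorm_le_cart: "(\<And>i. \<bar>x $ i\<bar> \<le> c) \<Longrightarrow> infnorm (x :: real^'n) \<le> c"
  unfolding infnorm_cart by (rule cSup_least) auto

lemma resid_nonneg: "resid A b x \<ge> 0"
  unfolding resid_def by (rule infnorm_pos_le)

lemma row_residual_le_resid: "A $ t \<bullet> x - b $ t \<le> resid A b x"
  using component_le_infnorm_cart[of "\<chi> t. max (A $ t \<bullet> x - b $ t) 0" t]
  unfolding resid_def by simp

lemma resid_le:
  assumes "\<And>t. A $ t \<bullet> x - b $ t \<le> c" and "0 \<le> c"
  shows "resid A b x \<le> c"
  unfolding resid_def using assms by (intro infnorm_le_cart) simp

lemma resid_eq_0_iff: "resid A b x = 0 \<longleftrightarrow> x \<in> feas A b"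
proof
  assume "resid A b x = 0"
  then show "x \<in> feas A b" using row_residual_le_resid[of A _ x b] by (simp add: feas_def)
next
  assume "x \<in> feas A b"
  then have "resid A b x \<le> 0" by (intro resid_le) (simp_all add: feas_def)
  then show "resid A b x = 0" using resid_nonneg[of A b x] by simp
qed

lemma pdist_ge_row:
  "dual_norm N ((fst p - fst q) $ t) \<le> pdist N p q"
  "\<bar>(snd p - snd q) $ t\<bar> \<le> pdist N p q"
  unfolding pdist_def pnorm_def by (auto simp: Max_ge_iff intro!: exI[of _ t])

lemma pdist_nonneg: "pdist N p q \<ge> 0"
  using pdist_ge_row(2)[of p q undefined N] by linarith

lemma pdist_le:
  assumes "\<And>t. dual_norm N ((A - A') $ t) \<le> c" and "\<And>t. \<bar>(b - b') $ t\<bar> \<le> c"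
  shows "pdist N (A, b) (A', b') \<le> c"
  unfolding pdist_def pnorm_def using assms by simp

definition upper_lipschitz_at ::
    "(real^'n \<Rightarrow> real) \<Rightarrow> real^'n^'m \<Rightarrow> real^'m \<Rightarrow> real \<Rightarrow> real \<Rightarrow> bool" where
  "upper_lipschitz_at N Abar bbar \<kappa> \<epsilon> \<longleftrightarrow>
     (\<forall>A b. pdist N (A, b) (Abar, bbar) < \<epsilon> \<longrightarrow>
        (\<forall>x\<in>feas A b. distN N x (feas Abar bbar) \<le> ereal \<kappa> * ereal (pdist N (A, b) (Abar, bbar))))"

lemma Lipusc_feas_eq_Inf:
  "Lipusc_feas N Abar bbar = Inf {ereal \<kappa> | \<kappa>. \<kappa> \<ge> 0 \<and> (\<exists>\<epsilon>>0. upper_lipschitz_at N Abar bbar \<kappa> \<epsilon>)}"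
  unfolding Lipusc_feas_def upper_lipschitz_at_def ..

context
  fixes N :: "real^'n \<Rightarrow> real"
  assumes N: "is_norm N"
begin

lemma is_norm_eq_0: "N x = 0 \<longleftrightarrow> x = 0"
  and is_norm_scaleR: "N (c *\<^sub>R x) = \<bar>c\<bar> * N x"
  and is_norm_triangle: "N (x + y) \<le> N x + N y"
  using N unfolding is_norm_def by auto

lemma is_norm_zero [simp]: "N 0 = 0"
  using is_norm_eq_0 by simp

lemma is_norm_minus: "N (- x) = N x"
  using is_norm_scaleR[of "-1" x] by simp

lemma is_norm_nonneg: "N x \<ge> 0"
  using is_norm_triangle[of x "-x"] is_norm_minus[of x] by simp

lemma is_norm_pos: "x \<noteq> 0 \<Longrightarrow> N x > 0"
  using is_norm_eq_0 is_norm_nonneg by (simp add: order_less_le)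

lemma convex_on_is_norm: "convex_on UNIV N"
proof (rule convex_onI)
  fix t :: real and x y
  assume "0 < t" "t < 1"
  then show "N ((1 - t) *\<^sub>R x + t *\<^sub>R y) \<le> (1 - t) * N x + t * N y"
    using is_norm_triangle[of "(1 - t) *\<^sub>R x" "t *\<^sub>R y"] by (simp add: is_norm_scaleR)
qed simp

lemma convex_is_norm_ball: "convex {y. N y < 1}"
proof (rule convexI)
  fix a b :: "real^'n" and u v :: real
  assume "a \<in> {y. N y < 1}" "b \<in> {y. N y < 1}" "0 \<le> u" "0 \<le> v" "u + v = 1"
  moreover have "N (u *\<^sub>R a + v *\<^sub>R b) \<le> u * N a + v * N b"
    using is_norm_triangle[of "u *\<^sub>R a" "v *\<^sub>R b"] \<open>0 \<le> u\<close> \<open>0 \<le> v\<close>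
    by (simp add: is_norm_scaleR)
  ultimately show "u *\<^sub>R a + v *\<^sub>R b \<in> {y. N y < 1}"
    using convex_bound_lt[of "N a" 1 "N b" u v] by simp
qed

lemma continuous_on_is_norm: "continuous_on UNIV N"
  by (rule convex_on_continuous[OF open_UNIV convex_on_is_norm])

lemma is_norm_bounded_below: "\<exists>c>0. \<forall>x. c * norm x \<le> N x"
proof -
  let ?S = "sphere (0::real^'n) 1"
  have "axis undefined 1 \<in> ?S" by simp
  then obtain x0 where x0: "x0 \<in> ?S" and min: "\<And>y. y \<in> ?S \<Longrightarrow> N x0 \<le> N y"
    using continuous_attains_inf[OF compact_sphere _ continuous_on_subset[OF continuous_on_is_norm]]
    by blast
  have "N x0 * norm x \<le> N x" for x
  proof (cases "x = 0")
    case False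
    then have "N x0 \<le> N ((1 / norm x) *\<^sub>R x)" by (intro min) simp
    then show ?thesis using False by (simp add: is_norm_scaleR field_simps)
  qed simp
  moreover have "N x0 > 0" using x0 by (intro is_norm_pos) auto
  ultimately show ?thesis by blast
qed

lemma bdd_above_dual_norm: "bdd_above {\<bar>u \<bullet> x\<bar> | x. N x \<le> 1}"
proof -
  obtain c where c: "c > 0" "\<And>x. c * norm x \<le> N x" using is_norm_bounded_below by blast
  have "\<bar>u \<bullet> x\<bar> \<le> norm u * (1 / c)" if "N x \<le> 1" for x
  proof -
    have "norm x \<le> 1 / c" using c(2)[of x] that c(1) by (simp add: field_simps)
    then show ?thesis
      using Cauchy_Schwarz_ineq2[of u x] by (meson mult_left_mono norm_ge_zero order_trans)
  qed
  then show ?thesis unfolding bdd_above_def by blast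
qed

lemma dual_norm_upper: "N x \<le> 1 \<Longrightarrow> \<bar>u \<bullet> x\<bar> \<le> dual_norm N u"
  unfolding dual_norm_def by (rule cSup_upper[OF _ bdd_above_dual_norm]) blast

lemma dual_norm_le:
  assumes "\<And>x. N x \<le> 1 \<Longrightarrow> \<bar>u \<bullet> x\<bar> \<le> c"
  shows "dual_norm N u \<le> c"
  unfolding dual_norm_def using assms by (intro cSup_least) (auto intro!: exI[of _ 0])

lemma inner_le_dual_norm: "\<bar>u \<bullet> x\<bar> \<le> dual_norm N u * N x"
proof (cases "x = 0")
  case True
  then show ?thesis using dual_norm_upper[of 0 u] by simp
next
  case False
  then have "N x > 0" by (rule is_norm_pos)
  moreover have "\<bar>u \<bullet> ((1 / N x) *\<^sub>R x)\<bar> \<le> dual_norm N u"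
    using \<open>N x > 0\<close> by (intro dual_norm_upper) (simp add: is_norm_scaleR)
  ultimately show ?thesis by (simp add: field_simps abs_mult)
qed

(* Separate the open unit ball of N from the point x / N x on its boundary. *)
lemma norming_functional: "\<exists>u. u \<bullet> x = N x \<and> dual_norm N u \<le> 1"
proof (cases "x = 0")
  case True
  then show ?thesis by (intro exI[of _ 0]) (simp add: dual_norm_le)
next
  case False
  then have Nx: "N x > 0" by (rule is_norm_pos)
  define x0 where "x0 = (1 / N x) *\<^sub>R x"
  have Nx0: "N x0 = 1" using Nx by (simp add: x0_def is_norm_scaleR)
  have "{y. N y < 1} \<inter> {x0} = {}" and "0 \<in> {y. N y < 1}" using Nx0 by auto
  then obtain a \<beta> where "a \<noteq> 0" "\<forall>y\<in>{y. N y < 1}. a \<bullet> y \<le> \<beta>" "\<forall>y\<in>{x0}. a \<bullet> y \<ge> \<beta>"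
    using separating_hyperplane_sets[OF convex_is_norm_ball convex_singleton] by blast
  then have below: "\<And>y. N y < 1 \<Longrightarrow> a \<bullet> y \<le> \<beta>" and above: "a \<bullet> x0 \<ge> \<beta>" by auto
  have le: "a \<bullet> y \<le> \<beta>" if "N y \<le> 1" for y
  proof (rule field_le_mult_one_interval)
    fix z :: real assume "0 < z" "z < 1"
    then have "N (z *\<^sub>R y) = z * N y" by (simp add: is_norm_scaleR)
    also have "\<dots> < 1" using mult_left_le[of "N y" z] that \<open>0 < z\<close> \<open>z < 1\<close> by linarith
    finally have "a \<bullet> (z *\<^sub>R y) \<le> \<beta>" by (rule below)
    then show "z * (a \<bullet> y) \<le> \<beta>" by simp
  qed
  have abs_le: "\<bar>a \<bullet> y\<bar> \<le> \<beta>" if "N y \<le> 1" for y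
  proof -
    have "a \<bullet> (- y) \<le> \<beta>" using that by (intro le) (simp add: is_norm_minus)
    then show ?thesis using le[OF that] by (simp add: abs_le_iff)
  qed
  have "a \<bullet> x0 = \<beta>" using le[of x0] Nx0 above by simp
  then have ax: "a \<bullet> x = \<beta> * N x" using Nx by (simp add: x0_def field_simps)
  have "\<beta> > 0"
  proof -
    have "a \<bullet> ((1 / (2 * N a)) *\<^sub>R a) \<le> \<beta>"
      using is_norm_pos[OF \<open>a \<noteq> 0\<close>] by (intro below) (simp add: is_norm_scaleR)
    moreover have "a \<bullet> ((1 / (2 * N a)) *\<^sub>R a) > 0"
      using is_norm_pos[OF \<open>a \<noteq> 0\<close>] \<open>a \<noteq> 0\<close> by simp
    ultimately show ?thesis by linarith
  qed
  show ?thesis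
  proof (intro exI[of _ "(1 / \<beta>) *\<^sub>R a"] conjI dual_norm_le)
    show "(1 / \<beta>) *\<^sub>R a \<bullet> x = N x" using ax \<open>\<beta> > 0\<close> by simp
    show "\<bar>(1 / \<beta>) *\<^sub>R a \<bullet> y\<bar> \<le> 1" if "N y \<le> 1" for y
      using abs_le[OF that] \<open>\<beta> > 0\<close> by (simp add: abs_mult field_simps)
  qed
qed

lemma distN_nonneg: "distN N x \<Omega> \<ge> 0"
  unfolding distN_def by (intro INF_greatest) (simp add: is_norm_nonneg)

lemma distN_le: "w \<in> \<Omega> \<Longrightarrow> distN N x \<Omega> \<le> ereal (N (x - w))"
  unfolding distN_def by (rule INF_lower)

lemma distN_self: "x \<in> \<Omega> \<Longrightarrow> distN N x \<Omega> = 0"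
  using distN_le[of x \<Omega> x] distN_nonneg[of x \<Omega>] by (simp add: zero_ereal_def)

lemma distN_finite:
  assumes "\<Omega> \<noteq> {}"
  shows "distN N x \<Omega> = ereal (real_of_ereal (distN N x \<Omega>))"
proof -
  obtain w where "w \<in> \<Omega>" using assms by blast
  then have "distN N x \<Omega> \<noteq> \<infinity>" using distN_le[of w \<Omega> x] by auto
  then show ?thesis using distN_nonneg[of x \<Omega>] by (cases "distN N x \<Omega>") auto
qed

lemma resid_le_pdist_mult:
  assumes "x \<in> feas A b"
  shows "resid Abar bbar x \<le> pdist N (A, b) (Abar, bbar) * (N x + 1)"
proof (rule resid_le)
  let ?d = "pdist N (A, b) (Abar, bbar)"
  fix t
  have "\<bar>(A $ t - Abar $ t) \<bullet> x\<bar> \<le> dual_norm N (A $ t - Abar $ t) * N x"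
    by (rule inner_le_dual_norm)
  also have "\<dots> \<le> ?d * N x"
    using pdist_ge_row(1)[of N "(A, b)" "(Abar, bbar)" t] is_norm_nonneg[of x]
    by (intro mult_right_mono) auto
  finally have "\<bar>(A $ t - Abar $ t) \<bullet> x\<bar> \<le> ?d * N x" .
  moreover have "\<bar>b $ t - bbar $ t\<bar> \<le> ?d"
    using pdist_ge_row(2)[of "(A, b)" "(Abar, bbar)" t N] by simp
  moreover have "A $ t \<bullet> x \<le> b $ t" using assms unfolding feas_def by simp
  ultimately show "Abar $ t \<bullet> x - bbar $ t \<le> ?d * (N x + 1)"
    by (simp add: algebra_simps)
next
  show "0 \<le> pdist N (A, b) (Abar, bbar) * (N x + 1)"
    using pdist_nonneg[of N "(A, b)" "(Abar, bbar)"] is_norm_nonneg[of x] by simp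
qed

(* Shift every row along a norming functional of x by the relative residual. *)
lemma feasible_perturbation:
  fixes Abar :: "real^'n^'m"
  shows "\<exists>A b. x \<in> feas A b \<and> pdist N (A, b) (Abar, bbar) \<le> resid Abar bbar x / (N x + 1)"
proof -
  define \<rho> where "\<rho> = resid Abar bbar x / (N x + 1)"
  have Nx: "N x + 1 > 0" using is_norm_nonneg[of x] by simp
  have "\<rho> \<ge> 0" using resid_nonneg[of Abar bbar x] Nx by (simp add: \<rho>_def)
  obtain u where u: "u \<bullet> x = N x" "dual_norm N u \<le> 1"
    using norming_functional by blast
  define A :: "real^'n^'m" where "A = (\<chi> t. Abar $ t - \<rho> *\<^sub>R u)"
  define b :: "real^'m" where "b = (\<chi> t. bbar $ t + \<rho>)"
  have "x \<in> feas A b"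
    unfolding feas_def
  proof (clarify)
    fix t
    have "Abar $ t \<bullet> x - bbar $ t \<le> \<rho> * (N x + 1)"
      using row_residual_le_resid[of Abar t x bbar] Nx by (simp add: \<rho>_def)
    then show "A $ t \<bullet> x \<le> b $ t"
      using u(1) by (simp add: A_def b_def inner_diff_left algebra_simps)
  qed
  moreover have "pdist N (A, b) (Abar, bbar) \<le> \<rho>"
  proof (rule pdist_le)
    fix t
    have "\<bar>- (\<rho> *\<^sub>R u) \<bullet> y\<bar> \<le> \<rho>" if "N y \<le> 1" for y
    proof -
      have "\<bar>u \<bullet> y\<bar> \<le> 1"
        using order_trans[OF inner_le_dual_norm mult_le_one[OF u(2) is_norm_nonneg that]] .
      then show ?thesis using \<open>\<rho> \<ge> 0\<close> by (simp add: abs_mult mult_left_le)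
    qed
    then show "dual_norm N ((A - Abar) $ t) \<le> \<rho>"
      by (simp add: A_def dual_norm_le)
    show "\<bar>(b - bbar) $ t\<bar> \<le> \<rho>" using \<open>\<rho> \<ge> 0\<close> by (simp add: b_def)
  qed
  ultimately show ?thesis unfolding \<rho>_def by blast
qed

lemma sup_delta_nonneg:
  assumes "feas Abar bbar \<noteq> {}" and "\<delta> \<ge> 0"
  shows "sup_delta N Abar bbar \<delta> \<ge> 0"
proof -
  obtain w where "w \<in> feas Abar bbar" using assms(1) by blast
  then have "resid Abar bbar w = 0" by (simp add: resid_eq_0_iff)
  then have "ereal 0 \<in> {ereal ((N x + 1) * real_of_ereal (distN N x (feas Abar bbar)) / resid Abar bbar x) | x.
       resid Abar bbar x \<le> \<delta> * (N x + 1)}"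
    using assms(2) is_norm_nonneg[of w] by (intro CollectI exI[of _ w]) simp
  then show ?thesis unfolding sup_delta_def zero_ereal_def by (rule Sup_upper)
qed

lemma dist_le_sup_delta_resid:
  assumes "feas Abar bbar \<noteq> {}" and "sup_delta N Abar bbar \<delta> = ereal s"
    and "resid Abar bbar x \<le> \<delta> * (N x + 1)"
  shows "(N x + 1) * real_of_ereal (distN N x (feas Abar bbar)) \<le> s * resid Abar bbar x"
proof (cases "resid Abar bbar x = 0")
  case True
  then have "x \<in> feas Abar bbar" by (simp add: resid_eq_0_iff)
  then show ?thesis by (simp add: True distN_self)
next
  case False
  then have "resid Abar bbar x > 0" using resid_nonneg by (simp add: order_less_le)
  moreover have "ereal ((N x + 1) * real_of_ereal (distN N x (feas Abar bbar)) / resid Abar bbar x)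
      \<le> sup_delta N Abar bbar \<delta>"
    unfolding sup_delta_def using assms(3) by (intro Sup_upper) blast
  ultimately show ?thesis using assms(2) by (simp add: field_simps)
qed

lemma upper_lipschitz_at_sup_delta:
  assumes F: "feas Abar bbar \<noteq> {}" and s: "sup_delta N Abar bbar \<delta> = ereal s"
  shows "upper_lipschitz_at N Abar bbar s \<delta>"
  unfolding upper_lipschitz_at_def
proof (intro allI impI ballI)
  fix A b x
  define d where "d = pdist N (A, b) (Abar, bbar)"
  define D where "D = real_of_ereal (distN N x (feas Abar bbar))"
  assume "pdist N (A, b) (Abar, bbar) < \<delta>" and x: "x \<in> feas A b"
  then have "d < \<delta>" by (simp add: d_def)
  have "d \<ge> 0" unfolding d_def by (rule pdist_nonneg)
  have Nx: "N x + 1 > 0" using is_norm_nonneg[of x] by simp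
  have r: "resid Abar bbar x \<le> d * (N x + 1)"
    unfolding d_def using x by (rule resid_le_pdist_mult)
  have "s \<ge> 0" using sup_delta_nonneg[OF F, of \<delta>] s \<open>d < \<delta>\<close> \<open>d \<ge> 0\<close> by simp
  have "resid Abar bbar x \<le> \<delta> * (N x + 1)"
    using r mult_right_mono[of d \<delta> "N x + 1"] \<open>d < \<delta>\<close> Nx by linarith
  then have "(N x + 1) * D \<le> s * resid Abar bbar x"
    unfolding D_def by (rule dist_le_sup_delta_resid[OF F s])
  also have "\<dots> \<le> s * (d * (N x + 1))" using r \<open>s \<ge> 0\<close> by (rule mult_left_mono)
  also have "\<dots> = (N x + 1) * (s * d)" by simp
  finally have "D \<le> s * d" using Nx by (simp only: mult_le_cancel_left_pos)
  moreover have "distN N x (feas Abar bbar) = ereal D"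
    unfolding D_def by (rule distN_finite[OF F])
  ultimately show "distN N x (feas Abar bbar) \<le> ereal s * ereal (pdist N (A, b) (Abar, bbar))"
    by (simp add: d_def)
qed

lemma sup_delta_le_upper_lipschitz_constant:
  assumes F: "feas Abar bbar \<noteq> {}" and "\<kappa> \<ge> 0" and \<kappa>: "upper_lipschitz_at N Abar bbar \<kappa> \<epsilon>"
    and "\<delta> < \<epsilon>"
  shows "sup_delta N Abar bbar \<delta> \<le> ereal \<kappa>"
  unfolding sup_delta_def
proof (rule Sup_least, clarify)
  fix x
  define r where "r = resid Abar bbar x"
  define D where "D = real_of_ereal (distN N x (feas Abar bbar))"
  assume "resid Abar bbar x \<le> \<delta> * (N x + 1)"
  moreover have Nx: "N x + 1 > 0" using is_norm_nonneg[of x] by simp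
  ultimately have "r / (N x + 1) \<le> \<delta>" by (simp add: r_def field_simps)
  obtain A b where x: "x \<in> feas A b" and d: "pdist N (A, b) (Abar, bbar) \<le> r / (N x + 1)"
    unfolding r_def using feasible_perturbation by blast
  have "pdist N (A, b) (Abar, bbar) < \<epsilon>"
    using d \<open>r / (N x + 1) \<le> \<delta>\<close> \<open>\<delta> < \<epsilon>\<close> by linarith
  then have "distN N x (feas Abar bbar) \<le> ereal (\<kappa> * pdist N (A, b) (Abar, bbar))"
    using \<kappa> x unfolding upper_lipschitz_at_def by simp
  moreover have "distN N x (feas Abar bbar) = ereal D"
    unfolding D_def by (rule distN_finite[OF F])
  ultimately have "D \<le> \<kappa> * pdist N (A, b) (Abar, bbar)" by simp
  also have "\<dots> \<le> \<kappa> * (r / (N x + 1))" using d \<open>\<kappa> \<ge> 0\<close> by (rule mult_left_mono)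
  finally have "(N x + 1) * D \<le> \<kappa> * r" using Nx by (simp add: field_simps)
  have "(N x + 1) * D / r \<le> \<kappa>"
  proof (cases "r = 0")
    case False
    then have "r > 0" using resid_nonneg[of Abar bbar x] by (simp add: r_def)
    then show ?thesis using \<open>(N x + 1) * D \<le> \<kappa> * r\<close> by (simp add: pos_divide_le_eq)
  qed (simp add: \<open>\<kappa> \<ge> 0\<close>)
  then show "ereal ((N x + 1) * real_of_ereal (distN N x (feas Abar bbar)) / resid Abar bbar x) \<le> ereal \<kappa>"
    by (simp add: D_def r_def)
qed

lemma Lipusc_feas_le_sup_delta:
  assumes F: "feas Abar bbar \<noteq> {}" and "\<delta> > 0"
  shows "Lipusc_feas N Abar bbar \<le> sup_delta N Abar bbar \<delta>"
proof (cases "sup_delta N Abar bbar \<delta>")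
  case (real s)
  then have "s \<ge> 0" using sup_delta_nonneg[OF F, of \<delta>] \<open>\<delta> > 0\<close> by simp
  then show ?thesis
    unfolding Lipusc_feas_eq_Inf real using upper_lipschitz_at_sup_delta[OF F real] \<open>\<delta> > 0\<close>
    by (intro Inf_lower) blast
next
  case MInf
  then show ?thesis using sup_delta_nonneg[OF F, of \<delta>] \<open>\<delta> > 0\<close> by simp
qed simp

end

theorem proposition1:
  fixes N :: "real^'n \<Rightarrow> real" and Abar :: "real^'n^'m" and bbar :: "real^'m"
  assumes "is_norm N"
    and "feas Abar bbar \<noteq> {}"
  shows "((\<lambda>\<delta>. sup_delta N Abar bbar \<delta>) \<longlongrightarrow> Lipusc_feas N Abar bbar) (at_right 0)"
proof (rule order_tendstoI)
  fix a
  assume "a < Lipusc_feas N Abar bbar"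
  then show "\<forall>\<^sub>F \<delta> in at_right 0. a < sup_delta N Abar bbar \<delta>"
    using Lipusc_feas_le_sup_delta[OF assms]
    by (auto simp: eventually_at_right_field intro!: exI[of _ 1] elim: less_le_trans)
next
  fix a
  assume "Lipusc_feas N Abar bbar < a"
  then obtain \<kappa> \<epsilon> where \<kappa>: "\<kappa> \<ge> 0" "upper_lipschitz_at N Abar bbar \<kappa> \<epsilon>"
    and "\<epsilon> > 0" and "ereal \<kappa> < a"
    unfolding Lipusc_feas_eq_Inf by (auto simp: Inf_less_iff)
  show "\<forall>\<^sub>F \<delta> in at_right 0. sup_delta N Abar bbar \<delta> < a"
    unfolding eventually_at_right_field
  proof (intro exI[of _ \<epsilon>] conjI allI impI)
    fix \<delta> :: real
    assume "\<delta> < \<epsilon>"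
    then have "sup_delta N Abar bbar \<delta> \<le> ereal \<kappa>"
      by (rule sup_delta_le_upper_lipschitz_constant[OF assms \<kappa>])
    then show "sup_delta N Abar bbar \<delta> < a" using \<open>ereal \<kappa> < a\<close> by (rule le_less_trans)
  qed fact
qed

end
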